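(* Let $n\ge 3$ and let $\mathfrak{M}=(S,\mathcal{L})$ be a $\big(\binom{n+1}{2}_{\,n-1}\ \binom{n+1}{3}_{\,3}\big)$-configuration. Let $X_1\neq X_2$ be $n$-element subsets of $S$ such that $\mathfrak{M}$ freely contains the complete graphs $K_{X_1}$ and $K_{X_2}$ (these are complete graphs of maximal possible size freely contained in $\mathfrak{M}$), and let $Y_i=S\setminus X_i$, $i=1,2$. Then $Y_1\pitchfork Y_2:=(Y_1\cap Y_2)\cup\big((S\setminus Y_1)\cap(S\setminus Y_2)\big)$ is a hyperplane of $\mathfrak{M}$, and there is no set $C\subseteq S$ of pairwise collinear points of $\mathfrak{M}$ with $Y_1\pitchfork Y_2=S\setminus C$; i.e. $Y_1\pitchfork Y_2$ is not the complement of any complete subgraph of $\mathfrak{M}$.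
   Context: A $(v_r\ b_k)$-configuration is a partial linear space with $v$ points and $b$ lines, each point on exactly $r$ lines and each line containing exactly $k$ points. $\mathfrak{M}$ freely contains the complete graph $K_X$ ($X\subseteq S$) iff any two distinct points of $X$ are collinear, no three points of $X$ lie on a line, and for any disjoint $2$-subsets $\{a_1,a_2\},\{b_1,b_2\}$ of $X$ the line through $a_1,a_2$ and the line through $b_1,b_2$ are disjoint. A subspace is a set of points containing every line that meets it in at least two points; a hyperplane is a proper subspace meeting every line. *)

theory Defs
  imports Main
begin

text \<open>A (v_r b_k)-configuration: v points, b lines, each point on exactly r lines,
  each line has exactly k points, two distinct points on at most one line.\<close>

definition configuration :: "'a set \<Rightarrow> 'a set set \<Rightarrow> nat \<Rightarrow> nat \<Rightarrow> nat \<Rightarrow> nat \<Rightarrow> bool" where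
  "configuration S L v r b k \<longleftrightarrow>
     finite S \<and> card S = v \<and> finite L \<and> card L = b \<and>
     (\<forall>l\<in>L. l \<subseteq> S \<and> card l = k) \<and>
     (\<forall>p\<in>S. card {l\<in>L. p \<in> l} = r) \<and>
     (\<forall>p\<in>S. \<forall>q\<in>S. p \<noteq> q \<longrightarrow> (\<forall>l\<in>L. \<forall>m\<in>L. p \<in> l \<and> q \<in> l \<and> p \<in> m \<and> q \<in> m \<longrightarrow> l = m))"

definition collinear :: "'a set set \<Rightarrow> 'a \<Rightarrow> 'a \<Rightarrow> bool" where
  "collinear L p q \<longleftrightarrow> (\<exists>l\<in>L. p \<in> l \<and> q \<in> l)"

definition line_through :: "'a set set \<Rightarrow> 'a \<Rightarrow> 'a \<Rightarrow> 'a set" where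
  "line_through L p q = (THE l. l \<in> L \<and> p \<in> l \<and> q \<in> l)"

definition freely_contains_complete :: "'a set \<Rightarrow> 'a set set \<Rightarrow> 'a set \<Rightarrow> bool" where
  "freely_contains_complete S L X \<longleftrightarrow>
     X \<subseteq> S \<and>
     (\<forall>a\<in>X. \<forall>b\<in>X. a \<noteq> b \<longrightarrow> collinear L a b) \<and>
     (\<forall>l\<in>L. card (l \<inter> X) \<le> 2) \<and>
     (\<forall>a1\<in>X. \<forall>a2\<in>X. \<forall>b1\<in>X. \<forall>b2\<in>X.
        a1 \<noteq> a2 \<and> b1 \<noteq> b2 \<and> {a1, a2} \<inter> {b1, b2} = {} \<longrightarrow>
        line_through L a1 a2 \<inter> line_through L b1 b2 = {})"

definition subspace :: "'a set \<Rightarrow> 'a set set \<Rightarrow> 'a set \<Rightarrow> bool" where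
  "subspace S L H \<longleftrightarrow> H \<subseteq> S \<and> (\<forall>l\<in>L. 2 \<le> card (l \<inter> H) \<longrightarrow> l \<subseteq> H)"

definition hyperplane :: "'a set \<Rightarrow> 'a set set \<Rightarrow> 'a set \<Rightarrow> bool" where
  "hyperplane S L H \<longleftrightarrow> subspace S L H \<and> H \<noteq> S \<and> (\<forall>l\<in>L. l \<inter> H \<noteq> {})"

definition sym_pitchfork :: "'a set \<Rightarrow> 'a set \<Rightarrow> 'a set \<Rightarrow> 'a set" where
  "sym_pitchfork S Y1 Y2 = (Y1 \<inter> Y2) \<union> ((S - Y1) \<inter> (S - Y2))"

end

theory Submission
  imports Defs
begin

text \<open>A point x of X lies on r = n - 1 lines, and its n - 1 neighbours in X lie on pairwise
  different ones, so every line through x carries exactly one further point of X: lines meet X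
  in 0 or 2 points. If a point outside X lay on two such secants, their pairs in X would be
  disjoint or the secants would coincide, so freeness forbids it. Consequently every line meets
  the symmetric difference D of X1 and X2 in an even number of its 3 points, which makes S - D
  (this is the set sym_pitchfork S Y1 Y2) a hyperplane. Finally X1 \<inter> X2 has at most one point, so D contains
  two points a, a' of X1 and a point x of X2; if D were a clique, the secants through x and a, a'
  would coincide and carry three points of D.\<close>

lemma configuration_line_unique:
  assumes "configuration S L v r b k" "l \<in> L" "m \<in> L"
    and "p \<in> l" "q \<in> l" "p \<in> m" "q \<in> m" "p \<noteq> q"
  shows "l = m"
proof -
  have "p \<in> S" "q \<in> S" using assms(1,2,4,5) unfolding configuration_def by blast+
  then show ?thesis using assms unfolding configuration_def by blast
qed

lemma line_through_eqI:
  assumes "configuration S L v r b k" "l \<in> L" "p \<in> l" "q \<in> l" "p \<noteq> q"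
  shows "line_through L p q = l"
  unfolding line_through_def
  using assms configuration_line_unique[OF assms(1)] by (intro the_equality) blast+

lemma configuration_finite_line:
  assumes "configuration S L v r b k" "l \<in> L"
  shows "finite l"
  using assms unfolding configuration_def by (meson finite_subset)

lemma free_complete_finite:
  assumes "configuration S L v r b k" "freely_contains_complete S L X"
  shows "finite X"
  using assms unfolding configuration_def freely_contains_complete_def by (meson finite_subset)

lemma free_complete_card_Int_line_le:
  assumes "freely_contains_complete S L X" "l \<in> L"
  shows "card (l \<inter> X) \<le> 2"
  using assms unfolding freely_contains_complete_def by blast

lemma free_complete_line_through_disjoint:
  assumes "freely_contains_complete S L X"
    and "a \<in> X" "c \<in> X" "a' \<in> X" "c' \<in> X" "a \<noteq> c" "a' \<noteq> c'" "{a, c} \<inter> {a', c'} = {}"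
  shows "line_through L a c \<inter> line_through L a' c' = {}"
proof -
  have "\<forall>a1\<in>X. \<forall>a2\<in>X. \<forall>b1\<in>X. \<forall>b2\<in>X.
      a1 \<noteq> a2 \<and> b1 \<noteq> b2 \<and> {a1, a2} \<inter> {b1, b2} = {} \<longrightarrow>
      line_through L a1 a2 \<inter> line_through L b1 b2 = {}"
    using assms(1) unfolding freely_contains_complete_def by (elim conjE)
  then show ?thesis using assms(2-8) by blast
qed

lemma free_complete_line_meets_again:
  assumes conf: "configuration S L v (n - 1) b k" and fr: "freely_contains_complete S L X"
    and cX: "card X = n" and l: "l \<in> L" "x \<in> l" "x \<in> X"
  shows "\<exists>y \<in> X. y \<in> l \<and> y \<noteq> x"
proof (rule ccontr)
  assume no_other: "\<not> ?thesis"
  have "x \<in> S" and clique: "\<forall>a\<in>X. \<forall>b\<in>X. a \<noteq> b \<longrightarrow> collinear L a b"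
    using fr l unfolding freely_contains_complete_def by auto
  then have lines_x: "card {m \<in> L. x \<in> m} = n - 1" and "finite L"
    using conf unfolding configuration_def by blast+
  have "\<forall>y \<in> X - {x}. \<exists>m \<in> L. x \<in> m \<and> y \<in> m"
    using clique l(3) unfolding collinear_def by blast
  then obtain f where f: "\<And>y. y \<in> X - {x} \<Longrightarrow> f y \<in> L \<and> x \<in> f y \<and> y \<in> f y"
    by metis
  have maps: "f ` (X - {x}) \<subseteq> {m \<in> L. x \<in> m} - {l}"
  proof
    fix m assume "m \<in> f ` (X - {x})"
    then obtain y where "y \<in> X - {x}" "m = f y" by blast
    then show "m \<in> {m \<in> L. x \<in> m} - {l}" using f no_other by blast
  qed
  have "inj_on f (X - {x})"
  proof (rule inj_onI, rule ccontr)
    fix y z assume yz: "y \<in> X - {x}" "z \<in> X - {x}" "f y = f z" "y \<noteq> z"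
    then have "{x, y, z} \<subseteq> f y \<inter> X" and "card {x, y, z} = 3"
      using f l(3) by auto
    moreover have "finite (f y)" using configuration_finite_line[OF conf] f yz(1) by blast
    ultimately have "3 \<le> card (f y \<inter> X)" by (metis card_mono finite_Int)
    moreover have "card (f y \<inter> X) \<le> 2" using free_complete_card_Int_line_le[OF fr] f yz(1) by blast
    ultimately show False by linarith
  qed
  then have "card (X - {x}) \<le> card ({m \<in> L. x \<in> m} - {l})"
    using card_inj_on_le[OF _ maps] \<open>finite L\<close> by simp
  moreover have "l \<in> {m \<in> L. x \<in> m}" using l by blast
  then have "card {m \<in> L. x \<in> m} \<noteq> 0" using \<open>finite L\<close> by auto
  ultimately show False using cX l lines_x by (simp add: card_Diff_singleton_if)
qed

lemma free_complete_even_card_line_Int: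
  assumes conf: "configuration S L v (n - 1) b k" and fr: "freely_contains_complete S L X"
    and cX: "card X = n" and l: "l \<in> L"
  shows "even (card (l \<inter> X))"
proof (cases "l \<inter> X = {}")
  case False
  then obtain x where x: "x \<in> l" "x \<in> X" by blast
  then obtain y where "y \<in> X" "y \<in> l" "y \<noteq> x"
    using free_complete_line_meets_again[OF conf fr cX l] by blast
  then have "card {x, y} \<le> card (l \<inter> X)"
    using x configuration_finite_line[OF conf l] by (intro card_mono) auto
  then have "card (l \<inter> X) = 2"
    using free_complete_card_Int_line_le[OF fr l] \<open>y \<noteq> x\<close> by simp
  then show ?thesis by simp
qed simp

lemma even_card_Int_sym_diff:
  assumes "finite l" "even (card (l \<inter> A))" "even (card (l \<inter> B))"
  shows "even (card (l \<inter> sym_diff A B))"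
proof -
  let ?c = "card (l \<inter> A \<inter> B)"
  have "l \<inter> ((A - B) \<union> (B - A)) = (l \<inter> A - l \<inter> B) \<union> (l \<inter> B - l \<inter> A)" by blast
  moreover have "card (l \<inter> A - l \<inter> B) = card (l \<inter> A) - ?c"
    "card (l \<inter> B - l \<inter> A) = card (l \<inter> B) - ?c"
    using assms(1) by (simp_all add: card_Diff_subset_Int Int_ac)
  moreover have "?c \<le> card (l \<inter> A)" "?c \<le> card (l \<inter> B)"
    using assms(1) by (auto intro: card_mono)
  ultimately show ?thesis
    using assms by (simp add: card_Un_disjoint Diff_Int_distrib2 Int_ac)
qed

lemma Diff_not_empty_if_card_eq:
  assumes "finite X1" "card X1 = card X2" "X1 \<noteq> X2"
  shows "X2 - X1 \<noteq> {}"
proof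
  assume "X2 - X1 = {}"
  then have "X2 \<subseteq> X1" by blast
  then show False using card_subset_eq[OF assms(1)] assms(2,3) by metis
qed

text \<open>The secants to X through x come from disjoint pairs of X unless they share a point of X.\<close>

lemma free_complete_unique_secant:
  assumes conf: "configuration S L v (n - 1) b k" and fr: "freely_contains_complete S L X"
    and cX: "card X = n" and x: "x \<notin> X"
    and m: "m \<in> L" "x \<in> m" "a \<in> m" "a \<in> X" and m': "m' \<in> L" "x \<in> m'" "a' \<in> m'" "a' \<in> X"
  shows "m = m'"
proof -
  obtain c where c: "c \<in> X" "c \<in> m" "c \<noteq> a"
    using free_complete_line_meets_again[OF conf fr cX m(1,3,4)] by blast
  obtain c' where c': "c' \<in> X" "c' \<in> m'" "c' \<noteq> a'"
    using free_complete_line_meets_again[OF conf fr cX m'(1,3,4)] by blast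
  show ?thesis
  proof (cases "{a, c} \<inter> {a', c'} = {}")
    case True
    then have "line_through L a c \<inter> line_through L a' c' = {}"
      using free_complete_line_through_disjoint[OF fr m(4) c(1) m'(4) c'(1)] c(3) c'(3) by auto
    moreover have "line_through L a c = m" "line_through L a' c' = m'"
      using line_through_eqI[OF conf m(1) m(3) c(2)] line_through_eqI[OF conf m'(1) m'(3) c'(2)]
        c(3) c'(3) by auto
    ultimately show ?thesis using m(2) m'(2) by blast
  next
    case False
    then obtain y where "y \<in> m" "y \<in> m'" "y \<in> X"
      using m m' c c' by blast
    then show ?thesis
      using configuration_line_unique[OF conf m(1) m'(1) _ m(2) _ m'(2)] x by metis
  qed
qed

lemma free_complete_card_Int_le_1:
  assumes conf: "configuration S L v (n - 1) b k"
    and fr1: "freely_contains_complete S L X1" and cX1: "card X1 = n"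
    and fr2: "freely_contains_complete S L X2" and x: "x \<in> X2 - X1"
  shows "card (X1 \<inter> X2) \<le> 1"
proof -
  have "y = y'" if y: "y \<in> X1 \<inter> X2" "y' \<in> X1 \<inter> X2" for y y'
  proof (rule ccontr)
    assume "y \<noteq> y'"
    have clique: "\<forall>a\<in>X2. \<forall>b\<in>X2. a \<noteq> b \<longrightarrow> collinear L a b"
      using fr2 unfolding freely_contains_complete_def by blast
    obtain m where m: "m \<in> L" "y \<in> m" "x \<in> m"
      using clique x y(1) unfolding collinear_def by (metis DiffE IntD1 IntD2)
    obtain m' where m': "m' \<in> L" "y' \<in> m'" "x \<in> m'"
      using clique x y(2) unfolding collinear_def by (metis DiffE IntD1 IntD2)
    have "m = m'"
      using free_complete_unique_secant[OF conf fr1 cX1 _ m(1,3,2) _ m'(1,3,2)] x y by blast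
    moreover have "x \<noteq> y" "x \<noteq> y'" using x y by auto
    ultimately have "{x, y, y'} \<subseteq> m \<inter> X2" and "card {x, y, y'} = 3"
      using m m' x y \<open>y \<noteq> y'\<close> by auto
    then have "3 \<le> card (m \<inter> X2)"
      using configuration_finite_line[OF conf m(1)] by (metis card_mono finite_Int)
    then show False using free_complete_card_Int_line_le[OF fr2 m(1)] by simp
  qed
  then show ?thesis using free_complete_finite[OF conf fr1] by (simp add: card_le_Suc0_iff_eq)
qed

text \<open>On lines of size 3 an even intersection with D is 0 or 2, so S - D meets each line in
  1 or 3 points.\<close>

lemma hyperplane_Diff_evenly_met:
  assumes conf: "configuration S L v r b 3" and "D \<subseteq> S" "D \<noteq> {}"
    and even: "\<And>l. l \<in> L \<Longrightarrow> even (card (l \<inter> D))"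
  shows "hyperplane S L (S - D)"
  unfolding hyperplane_def subspace_def
proof (intro conjI ballI impI)
  show "S - D \<noteq> S" using assms(2,3) by blast
next
  fix l assume l: "l \<in> L"
  have "l \<subseteq> S" "card l = 3" using conf l unfolding configuration_def by blast+
  then have "finite l" by (metis card.infinite zero_neq_numeral)
  have "l \<inter> (S - D) = l - l \<inter> D" using \<open>l \<subseteq> S\<close> by blast
  then have lD: "card (l \<inter> (S - D)) + card (l \<inter> D) = 3"
    using \<open>finite l\<close> \<open>card l = 3\<close> card_mono[OF \<open>finite l\<close>, of "l \<inter> D"]
    by (simp add: card_Diff_subset)
  have "card (l \<inter> D) \<le> 3" using lD by linarith
  then have D02: "card (l \<inter> D) = 0 \<or> card (l \<inter> D) = 2" using even[OF l] by presburger
  show "l \<inter> (S - D) \<noteq> {}" using lD D02 by auto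
  assume "2 \<le> card (l \<inter> (S - D))"
  then have "card (l \<inter> D) = 0" using lD D02 by linarith
  then show "l \<subseteq> S - D" using \<open>l \<subseteq> S\<close> \<open>finite l\<close> by auto
qed simp

lemma free_complete_even_card_Int_sym_diff:
  assumes conf: "configuration S L v (n - 1) b k"
    and "freely_contains_complete S L X1" "card X1 = n"
    and "freely_contains_complete S L X2" "card X2 = n" and l: "l \<in> L"
  shows "even (card (l \<inter> sym_diff X1 X2))"
  using configuration_finite_line[OF conf l]
    free_complete_even_card_line_Int[OF conf assms(2,3) l]
    free_complete_even_card_line_Int[OF conf assms(4,5) l]
  by (rule even_card_Int_sym_diff)

lemma free_complete_sym_diff_not_clique:
  assumes conf: "configuration S L v (n - 1) b 3" and "n \<ge> 3"
    and fr1: "freely_contains_complete S L X1" and cX1: "card X1 = n"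
    and fr2: "freely_contains_complete S L X2" and cX2: "card X2 = n"
    and "X1 \<noteq> X2"
  defines "D \<equiv> sym_diff X1 X2"
  shows "\<not> (\<forall>a\<in>D. \<forall>b\<in>D. a \<noteq> b \<longrightarrow> collinear L a b)"
proof
  assume clique: "\<forall>a\<in>D. \<forall>b\<in>D. a \<noteq> b \<longrightarrow> collinear L a b"
  have fin: "finite X1" using free_complete_finite[OF conf fr1] .
  then obtain x where x: "x \<in> X2 - X1"
    using Diff_not_empty_if_card_eq cX1 cX2 \<open>X1 \<noteq> X2\<close> by (metis ex_in_conv)
  have "card (X1 - X2) = card X1 - card (X1 \<inter> X2)"
    using fin by (simp add: card_Diff_subset_Int)
  then have "2 \<le> card (X1 - X2)"
    using free_complete_card_Int_le_1[OF conf fr1 cX1 fr2 x] cX1 \<open>n \<ge> 3\<close> by linarith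
  then obtain a a' where a: "a \<in> X1 - X2" "a' \<in> X1 - X2" "a \<noteq> a'"
    using card_le_Suc0_iff_eq[of "X1 - X2"] fin by force
  have "a \<in> D" "a' \<in> D" "x \<in> D" using a x unfolding D_def by blast+
  then obtain m m' where m: "m \<in> L" "a \<in> m" "x \<in> m" and m': "m' \<in> L" "a' \<in> m'" "x \<in> m'"
    using clique a x unfolding collinear_def by (metis DiffD1 DiffD2)
  have "m = m'"
    using free_complete_unique_secant[OF conf fr1 cX1 _ m(1,3,2) _ m'(1,3,2)] a x by blast
  moreover have "a \<noteq> x" "a' \<noteq> x" using a x by auto
  ultimately have "{a, a', x} \<subseteq> m \<inter> D" "card {a, a', x} = 3"
    using m m' a x \<open>x \<in> D\<close> \<open>a \<in> D\<close> \<open>a' \<in> D\<close> by auto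
  moreover have "card m = 3" using conf m(1) unfolding configuration_def by blast
  moreover have "finite m" using configuration_finite_line[OF conf m(1)] .
  ultimately have "m \<inter> D = m"
    by (metis card_mono card_subset_eq finite_Int inf_le1 order_antisym)
  then show False
    using free_complete_even_card_Int_sym_diff[OF conf fr1 cX1 fr2 cX2 m(1)] \<open>card m = 3\<close>
    unfolding D_def by simp
qed

theorem proposition1p8:
  fixes S :: "'a set" and L :: "'a set set" and n :: nat and X1 X2 :: "'a set"
  assumes "n \<ge> 3"
    and "configuration S L ((n + 1) choose 2) (n - 1) ((n + 1) choose 3) 3"
    and "X1 \<subseteq> S" and "X2 \<subseteq> S" and "card X1 = n" and "card X2 = n" and "X1 \<noteq> X2"
    and "freely_contains_complete S L X1" and "freely_contains_complete S L X2"
  shows "hyperplane S L (sym_pitchfork S (S - X1) (S - X2))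
    \<and> \<not> (\<exists>C\<subseteq>S. (\<forall>a\<in>C. \<forall>b\<in>C. a \<noteq> b \<longrightarrow> collinear L a b)
                 \<and> sym_pitchfork S (S - X1) (S - X2) = S - C)"
proof -
  note conf = assms(2) and fr1 = assms(8) and fr2 = assms(9)
  define D where "D = sym_diff X1 X2"
  have pitchfork: "sym_pitchfork S (S - X1) (S - X2) = S - D"
    unfolding sym_pitchfork_def D_def using assms(3,4) by blast
  have "D \<subseteq> S" using assms(3,4) unfolding D_def by blast
  moreover have "D \<noteq> {}"
    using Diff_not_empty_if_card_eq[OF free_complete_finite[OF conf fr1]] assms(5-7) unfolding D_def by auto
  ultimately have "hyperplane S L (S - D)"
    using free_complete_even_card_Int_sym_diff[OF conf fr1 assms(5) fr2 assms(6)] unfolding D_def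
    by (rule hyperplane_Diff_evenly_met[OF conf])
  moreover have "\<not> (\<exists>C\<subseteq>S. (\<forall>a\<in>C. \<forall>b\<in>C. a \<noteq> b \<longrightarrow> collinear L a b) \<and> S - D = S - C)"
  proof
    assume "\<exists>C\<subseteq>S. (\<forall>a\<in>C. \<forall>b\<in>C. a \<noteq> b \<longrightarrow> collinear L a b) \<and> S - D = S - C"
    then obtain C where "C \<subseteq> S" "\<forall>a\<in>C. \<forall>b\<in>C. a \<noteq> b \<longrightarrow> collinear L a b" "S - D = S - C"
      by blast
    moreover have "C = D" using calculation(1,3) \<open>D \<subseteq> S\<close> by blast
    ultimately show False
      using free_complete_sym_diff_not_clique[OF conf assms(1) fr1 assms(5) fr2 assms(6,7)]
      unfolding D_def by blast
  qed
  ultimately show ?thesis using pitchfork by simp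
qed

end
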